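(* Let $m,n\in\mathbb{N}$. Then $K_{n,n}\subseteq K_{m,n}$.
   Context: Thompson's group $F$ is the group of piecewise linear homeomorphisms of $[0,1]$ with finitely many dyadic breakpoints and slopes integer powers of $2$. An element $h\in F$ has the pair of branches $u\rightarrow v$ (for finite binary words $u,v$) if $h(.u\alpha)=.v\alpha$ for every infinite binary word $\alpha$. For $H\le F$ write $u\sim_H v$ if some $h\in H$ has the pair of branches $u\rightarrow v$. The closure $\mathrm{Cl}(H)$ is the subgroup of all $f\in F$ for which there is a finite subdivision of $[0,1]$ into intervals on each of which $f$ coincides with some element of $H$; $H$ is closed if $H=\mathrm{Cl}(H)$ (intersections of closed subgroups are closed). For $m,n\in\mathbb{N}$ let $d=\gcd(m,n)$; $K_{m,n}$ is the minimal closed subgroup $K$ of $F$ such that: (a) $0^k1\sim_K 0^{k+d}1$ for all $k\in\mathbb{N}$; (b) $1^k0\sim_K 1^{k+d}0$ for all $k\in\mathbb{N}$; (c) $0^k1\sim_K 1^{d+1-k}0$ for $1\le k\le d$; (d) $0^{2k}10\sim_K 1^{1+3(n-k)}0$ for $1\le k\le n$; (e) $0^{2k}11\sim_K 1^{2+3(n-k)}0$ for $1\le k\le n$; (f) $0^{2k-1}1\sim_K 1^{3(n-k+1)}0$ for $1\le k\le n$. In particular $K_{n,n}$ is defined with $d=n$. *)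

theory Defs
  imports Complex_Main
begin

definition dyadic :: "real \<Rightarrow> bool" where
  "dyadic x \<longleftrightarrow> (\<exists>(k::int) (j::nat). x = of_int k / 2 ^ j)"

text \<open>Elements of F are represented as functions real to real that are the
  identity outside [0,1] (so that composition and inv are the group operations).\<close>
definition thompsonF :: "(real \<Rightarrow> real) set" where
  "thompsonF = {f. (\<forall>x. x \<notin> {0..1} \<longrightarrow> f x = x)
     \<and> bij_betw f {0..1} {0..1} \<and> continuous_on {0..1} f
     \<and> (\<exists>ps::real list. length ps \<ge> 2 \<and> sorted_wrt (<) ps \<and> hd ps = 0 \<and> last ps = 1
          \<and> (\<forall>p\<in>set ps. dyadic p)
          \<and> (\<forall>i < length ps - 1. \<exists>(a::int) (b::real).
                \<forall>x\<in>{ps ! i .. ps ! Suc i}. f x = 2 powr (of_int a) * x + b))}"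

text \<open>Finite binary words are bool lists (False = 0, True = 1);
  infinite binary words are functions nat to bool.\<close>
definition word_app :: "bool list \<Rightarrow> (nat \<Rightarrow> bool) \<Rightarrow> (nat \<Rightarrow> bool)" where
  "word_app u \<alpha> = (\<lambda>i. if i < length u then u ! i else \<alpha> (i - length u))"

definition word_val :: "(nat \<Rightarrow> bool) \<Rightarrow> real" where
  "word_val \<alpha> = (\<Sum>i. (if \<alpha> i then 1 else 0) / 2 ^ Suc i)"

definition has_pair :: "(real \<Rightarrow> real) \<Rightarrow> bool list \<Rightarrow> bool list \<Rightarrow> bool" where
  "has_pair h u v \<longleftrightarrow> (\<forall>\<alpha>. h (word_val (word_app u \<alpha>)) = word_val (word_app v \<alpha>))"

definition sim_in :: "(real \<Rightarrow> real) set \<Rightarrow> bool list \<Rightarrow> bool list \<Rightarrow> bool" where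
  "sim_in H u v \<longleftrightarrow> (\<exists>h\<in>H. has_pair h u v)"

definition subgroupF :: "(real \<Rightarrow> real) set \<Rightarrow> bool" where
  "subgroupF H \<longleftrightarrow> H \<subseteq> thompsonF \<and> id \<in> H
     \<and> (\<forall>f\<in>H. \<forall>g\<in>H. f \<circ> g \<in> H) \<and> (\<forall>f\<in>H. inv f \<in> H)"

definition ClF :: "(real \<Rightarrow> real) set \<Rightarrow> (real \<Rightarrow> real) set" where
  "ClF H = {f \<in> thompsonF. \<exists>ps::real list. length ps \<ge> 2 \<and> sorted_wrt (<) ps
       \<and> hd ps = 0 \<and> last ps = 1
       \<and> (\<forall>i < length ps - 1. \<exists>h\<in>H. \<forall>x\<in>{ps ! i .. ps ! Suc i}. f x = h x)}"

definition closed_subgroupF :: "(real \<Rightarrow> real) set \<Rightarrow> bool" where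
  "closed_subgroupF H \<longleftrightarrow> subgroupF H \<and> ClF H = H"

abbreviation zs :: "nat \<Rightarrow> bool list" where "zs k \<equiv> replicate k False"
abbreviation os :: "nat \<Rightarrow> bool list" where "os k \<equiv> replicate k True"

text \<open>Conditions (a)-(f) with parameter d = gcd m n; natural numbers k in (a),(b)
  range over k \<ge> 1.\<close>
definition K_conds :: "nat \<Rightarrow> nat \<Rightarrow> (real \<Rightarrow> real) set \<Rightarrow> bool" where
  "K_conds d n K \<longleftrightarrow>
     (\<forall>k\<ge>1. sim_in K (zs k @ [True]) (zs (k + d) @ [True]))
   \<and> (\<forall>k\<ge>1. sim_in K (os k @ [False]) (os (k + d) @ [False]))
   \<and> (\<forall>k\<in>{1..d}. sim_in K (zs k @ [True]) (os (d + 1 - k) @ [False]))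
   \<and> (\<forall>k\<in>{1..n}. sim_in K (zs (2*k) @ [True, False]) (os (1 + 3*(n - k)) @ [False]))
   \<and> (\<forall>k\<in>{1..n}. sim_in K (zs (2*k) @ [True, True]) (os (2 + 3*(n - k)) @ [False]))
   \<and> (\<forall>k\<in>{1..n}. sim_in K (zs (2*k - 1) @ [True]) (os (3*(n - k + 1)) @ [False]))"

definition Kmn :: "nat \<Rightarrow> nat \<Rightarrow> (real \<Rightarrow> real) set" where
  "Kmn m n = \<Inter>{K. closed_subgroupF K \<and> K_conds (gcd m n) n K}"

end

theory Submission
  imports Defs
begin

text \<open>Every subgroup satisfying conditions (a)--(f) with parameter \<open>d\<close> satisfies them
  with any multiple \<open>e\<close> of \<open>d\<close> in place of \<open>d\<close>; take \<open>d = gcd m n\<close> and \<open>e = n = gcd n n\<close>.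
  Conditions (d)--(f) do not involve \<open>d\<close>, and (a), (b) for \<open>e\<close> follow by iterating (a), (b)
  for \<open>d\<close>. For (c), write \<open>k = r + q d\<close> with \<open>1 \<le> r \<le> d\<close>; then
  \<open>0\<^sup>k1 \<sim> 0\<^sup>r1 \<sim> 1\<^bsup>d+1-r\<^esup>0 \<sim> 1\<^bsup>e+1-k\<^esup>0\<close> by (a), (c), (b), because \<open>\<sim>\<^sub>K\<close> is an
  equivalence relation when \<open>K\<close> is a subgroup.\<close>

lemma thompsonF_inj:
  assumes "h \<in> thompsonF"
  shows "inj h"
proof (rule injI)
  fix x y
  assume eq: "h x = h y"
  have fixed: "\<And>z. z \<notin> {0..1} \<Longrightarrow> h z = z" and bij: "bij_betw h {0..1} {0..1}"
    using assms unfolding thompsonF_def by auto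
  show "x = y"
  proof (cases "x \<in> {0..1}"; cases "y \<in> {0..1}")
    assume "x \<in> {0..1}" "y \<in> {0..1}"
    then show ?thesis using bij eq by (metis bij_betw_iff_bijections)
  next
    assume "x \<in> {0..1}" "y \<notin> {0..1}"
    then show ?thesis using bij eq fixed[of y] by (metis bij_betwE)
  next
    assume "x \<notin> {0..1}" "y \<in> {0..1}"
    then show ?thesis using bij eq fixed[of x] by (metis bij_betwE)
  next
    assume "x \<notin> {0..1}" "y \<notin> {0..1}"
    then show ?thesis using eq fixed[of x] fixed[of y] by simp
  qed
qed

lemma sim_in_refl:
  assumes "subgroupF K"
  shows "sim_in K u u"
proof -
  have "id \<in> K" using assms unfolding subgroupF_def by blast
  moreover have "has_pair id u u" unfolding has_pair_def by simp
  ultimately show ?thesis unfolding sim_in_def by blast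
qed

lemma sim_in_sym:
  assumes K: "subgroupF K" and "sim_in K u v"
  shows "sim_in K v u"
proof -
  obtain h where h: "h \<in> K" "has_pair h u v" using assms(2) unfolding sim_in_def by auto
  have "inj h" using h(1) K thompsonF_inj unfolding subgroupF_def by auto
  then have "has_pair (inv h) v u" using h(2) unfolding has_pair_def by (metis inv_f_f)
  moreover have "inv h \<in> K" using h(1) K unfolding subgroupF_def by auto
  ultimately show ?thesis unfolding sim_in_def by auto
qed

lemma sim_in_trans:
  assumes "subgroupF K" and "sim_in K u v" and "sim_in K v w"
  shows "sim_in K u w"
  using assms unfolding sim_in_def subgroupF_def has_pair_def by (metis comp_apply)

lemma sim_in_iterate_step:
  fixes j :: nat
  assumes K: "subgroupF K" and step: "\<forall>k\<ge>1. sim_in K (f k) (f (k + d))" and "k \<ge> 1"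
  shows "sim_in K (f k) (f (k + j * d))"
proof (induction j)
  case 0
  show ?case using sim_in_refl[OF K] by simp
next
  case (Suc j)
  have "sim_in K (f (k + j * d)) (f (k + j * d + d))" using step \<open>k \<ge> 1\<close> by simp
  moreover have "k + Suc j * d = k + j * d + d" by simp
  ultimately show ?case using sim_in_trans[OF K Suc] by metis
qed

lemma split_below_multiple:
  fixes k c d :: nat
  assumes "1 \<le> k" and "k \<le> c * d"
  obtains r q where "k = r + q * d" and "1 \<le> r" and "r \<le> d" and "q < c"
proof
  have "d > 0" using assms by (cases d) auto
  show "k = (k - 1) mod d + 1 + (k - 1) div d * d"
    using assms(1) mod_div_mult_eq[of "k - 1" d] by simp
  show "1 \<le> (k - 1) mod d + 1" by simp
  show "(k - 1) mod d + 1 \<le> d" using \<open>d > 0\<close> by (simp add: Suc_leI)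
  have "(k - 1) div d * d \<le> k - 1" by simp
  then have "(k - 1) div d * d < c * d" using assms by linarith
  then show "(k - 1) div d < c" by simp
qed

lemma sim_in_zeros_ones_multiple:
  assumes K: "subgroupF K" and "d dvd e"
    and zeros: "\<forall>k\<ge>1. sim_in K (zs k @ [True]) (zs (k + d) @ [True])"
    and ones: "\<forall>k\<ge>1. sim_in K (os k @ [False]) (os (k + d) @ [False])"
    and zeros_ones: "\<forall>k\<in>{1..d}. sim_in K (zs k @ [True]) (os (d + 1 - k) @ [False])"
    and "k \<in> {1..e}"
  shows "sim_in K (zs k @ [True]) (os (e + 1 - k) @ [False])"
proof -
  obtain c where e: "e = c * d" using \<open>d dvd e\<close> by (metis dvdE mult.commute)
  obtain r q where k: "k = r + q * d" and r: "1 \<le> r" "r \<le> d" and "q < c"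
    using split_below_multiple \<open>k \<in> {1..e}\<close> e by (metis atLeastAtMost_iff)
  define j where "j = c - 1 - q"
  have "c = j + q + 1" using \<open>q < c\<close> unfolding j_def by simp
  then have "e = j * d + q * d + d" using e by (simp add: algebra_simps)
  then have exponent: "d + 1 - r + j * d = e + 1 - k"
    using k r by simp
  have "sim_in K (zs k @ [True]) (zs r @ [True])"
    using sim_in_sym[OF K sim_in_iterate_step[OF K zeros \<open>1 \<le> r\<close>, of q]] k by simp
  moreover have "sim_in K (zs r @ [True]) (os (d + 1 - r) @ [False])"
    using zeros_ones r by auto
  moreover have "sim_in K (os (d + 1 - r) @ [False]) (os (e + 1 - k) @ [False])"
    using sim_in_iterate_step[OF K ones, of "d + 1 - r" j] r exponent by simp
  ultimately show ?thesis using sim_in_trans[OF K] by blast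
qed

lemma K_conds_dvd:
  assumes K: "subgroupF K" and "d dvd e" and "K_conds d n K"
  shows "K_conds e n K"
proof -
  obtain c where e: "e = d * c" using \<open>d dvd e\<close> by (auto elim: dvdE)
  have zeros: "\<forall>k\<ge>1. sim_in K (zs k @ [True]) (zs (k + d) @ [True])"
    and ones: "\<forall>k\<ge>1. sim_in K (os k @ [False]) (os (k + d) @ [False])"
    using \<open>K_conds d n K\<close> unfolding K_conds_def by auto
  have "\<forall>k\<ge>1. sim_in K (zs k @ [True]) (zs (k + e) @ [True])"
    using sim_in_iterate_step[OF K zeros, of _ c] e by (simp add: mult.commute)
  moreover have "\<forall>k\<ge>1. sim_in K (os k @ [False]) (os (k + e) @ [False])"
    using sim_in_iterate_step[OF K ones, of _ c] e by (simp add: mult.commute)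
  moreover have "\<forall>k\<in>{1..e}. sim_in K (zs k @ [True]) (os (e + 1 - k) @ [False])"
    using sim_in_zeros_ones_multiple[OF K \<open>d dvd e\<close> zeros ones] \<open>K_conds d n K\<close>
    unfolding K_conds_def by blast
  ultimately show ?thesis using \<open>K_conds d n K\<close> unfolding K_conds_def by blast
qed

theorem lemma3p4:
  fixes m n :: nat
  shows "Kmn n n \<subseteq> Kmn m n"
proof -
  have "{K. closed_subgroupF K \<and> K_conds (gcd m n) n K}
      \<subseteq> {K. closed_subgroupF K \<and> K_conds (gcd n n) n K}"
    using K_conds_dvd[of _ "gcd m n" n n] unfolding closed_subgroupF_def by auto
  then show ?thesis unfolding Kmn_def by blast
qed

end
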